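(* Let $S$ be a finite semigroup. (i) If $S$ is monogenic, then $\sigma_s(S)=\infty$. (ii) If $S$ is a group, then $\sigma_s(S)=\sigma_g(S)$. (iii) If $S$ is neither monogenic nor a group, then $\sigma_s(S)=2$.
   Context: A semigroup is a nonempty set with an associative binary operation; a subsemigroup is a nonempty subset closed under the operation. A semigroup is monogenic if it is generated (as a semigroup) by a single element. For a semigroup $S$, $\sigma_s(S)$ denotes the least positive integer $n$ such that $S$ is the union of $n$ proper subsemigroups, and $\sigma_s(S)=\infty$ if no such finite $n$ exists. For a group $G$, $\sigma_g(G)$ is defined analogously using proper subgroups. *)

theory Defs
  imports "HOL-Algebra.Group" "HOL-Library.Extended_Nat"
begin

text \<open>A semigroup is given by a HOL-Algebra structure whose carrier is nonempty,
closed under the multiplication, with associative multiplication.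
The field one of the record is ignored.\<close>

definition is_semigroup :: "('a, 'b) monoid_scheme \<Rightarrow> bool" where
  "is_semigroup G \<longleftrightarrow> carrier G \<noteq> {} \<and>
     (\<forall>x\<in>carrier G. \<forall>y\<in>carrier G. x \<otimes>\<^bsub>G\<^esub> y \<in> carrier G) \<and>
     (\<forall>x\<in>carrier G. \<forall>y\<in>carrier G. \<forall>z\<in>carrier G.
        (x \<otimes>\<^bsub>G\<^esub> y) \<otimes>\<^bsub>G\<^esub> z = x \<otimes>\<^bsub>G\<^esub> (y \<otimes>\<^bsub>G\<^esub> z))"

definition subsemigroup :: "'a set \<Rightarrow> ('a, 'b) monoid_scheme \<Rightarrow> bool" where
  "subsemigroup H G \<longleftrightarrow> H \<noteq> {} \<and> H \<subseteq> carrier G \<and>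
     (\<forall>x\<in>H. \<forall>y\<in>H. x \<otimes>\<^bsub>G\<^esub> y \<in> H)"

definition sgr_generated :: "('a, 'b) monoid_scheme \<Rightarrow> 'a \<Rightarrow> 'a set" where
  "sgr_generated G a = \<Inter>{H. H \<subseteq> carrier G \<and> a \<in> H \<and>
                             (\<forall>x\<in>H. \<forall>y\<in>H. x \<otimes>\<^bsub>G\<^esub> y \<in> H)}"

definition monogenic :: "('a, 'b) monoid_scheme \<Rightarrow> bool" where
  "monogenic G \<longleftrightarrow> (\<exists>a\<in>carrier G. sgr_generated G a = carrier G)"

definition is_group_sgr :: "('a, 'b) monoid_scheme \<Rightarrow> bool" where
  "is_group_sgr G \<longleftrightarrow> (\<exists>e. group (G\<lparr>one := e\<rparr>))"

definition sigma_s :: "('a, 'b) monoid_scheme \<Rightarrow> enat" where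
  "sigma_s G = (if \<exists>F. finite F \<and> (\<forall>H\<in>F. subsemigroup H G \<and> H \<noteq> carrier G) \<and> \<Union>F = carrier G
     then enat (LEAST n. \<exists>F. finite F \<and> card F = n \<and>
                 (\<forall>H\<in>F. subsemigroup H G \<and> H \<noteq> carrier G) \<and> \<Union>F = carrier G)
     else \<infinity>)"

definition sigma_g :: "('a, 'b) monoid_scheme \<Rightarrow> enat" where
  "sigma_g G = (if \<exists>F. finite F \<and> (\<forall>H\<in>F. subgroup H G \<and> H \<noteq> carrier G) \<and> \<Union>F = carrier G
     then enat (LEAST n. \<exists>F. finite F \<and> card F = n \<and>
                 (\<forall>H\<in>F. subgroup H G \<and> H \<noteq> carrier G) \<and> \<Union>F = carrier G)
     else \<infinity>)"

end

theory Submission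
  imports Defs
begin

text \<open>A generator of a monogenic semigroup lies in no proper subsemigroup, so proper
subsemigroups never cover it. In a finite group every subsemigroup is a subgroup, so the
two covering numbers agree. Otherwise, suppose first that \<open>S\<close> has a proper right
ideal, and let \<open>M\<close> be a maximal one. Either a second proper right ideal \<open>N \<notsubseteq> M\<close>
exists and \<open>M \<union> N = S\<close>; or some \<open>x \<notin> M\<close> has \<open>xS \<noteq> S\<close>, then \<open>xS \<subseteq> M\<close>, so
\<open>M \<union> {x} = S\<close> and \<open>M\<close> together with a proper subsemigroup containing \<open>x\<close> covers
\<open>S\<close>; or \<open>xS = S\<close> for all \<open>x \<notin> M\<close>, and then \<open>S - M\<close> is a subsemigroup. Left ideals
are handled dually, and a semigroup without proper one-sided ideals is a group.\<close>

lemma is_semigroupD: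
  assumes "is_semigroup S"
  shows "carrier S \<noteq> {}"
    and "x \<in> carrier S \<Longrightarrow> y \<in> carrier S \<Longrightarrow> x \<otimes>\<^bsub>S\<^esub> y \<in> carrier S"
    and "x \<in> carrier S \<Longrightarrow> y \<in> carrier S \<Longrightarrow> z \<in> carrier S \<Longrightarrow>
      (x \<otimes>\<^bsub>S\<^esub> y) \<otimes>\<^bsub>S\<^esub> z = x \<otimes>\<^bsub>S\<^esub> (y \<otimes>\<^bsub>S\<^esub> z)"
  using assms unfolding is_semigroup_def by blast+

definition proper_subsemigroup :: "'a set \<Rightarrow> ('a, 'b) monoid_scheme \<Rightarrow> bool" where
  "proper_subsemigroup H S \<longleftrightarrow> subsemigroup H S \<and> H \<noteq> carrier S"

lemma sgr_generated_subset:
  assumes "H \<subseteq> carrier S" "a \<in> H" "\<forall>x\<in>H. \<forall>y\<in>H. x \<otimes>\<^bsub>S\<^esub> y \<in> H"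
  shows "sgr_generated S a \<subseteq> H"
  using assms unfolding sgr_generated_def by blast

lemma subsemigroup_sgr_generated:
  assumes "is_semigroup S" "a \<in> carrier S"
  shows "subsemigroup (sgr_generated S a) S" and "a \<in> sgr_generated S a"
  using assms unfolding sgr_generated_def is_semigroup_def subsemigroup_def by blast+

lemma monogenic_not_covered:
  assumes "monogenic S" and "\<forall>H\<in>F. proper_subsemigroup H S"
  shows "\<Union>F \<noteq> carrier S"
proof
  assume cover: "\<Union>F = carrier S"
  obtain a where a: "a \<in> carrier S" "sgr_generated S a = carrier S"
    using assms(1) unfolding monogenic_def by blast
  then obtain H where H: "H \<in> F" "a \<in> H" using cover by blast
  then have "subsemigroup H S" "H \<noteq> carrier S"
    using assms(2) unfolding proper_subsemigroup_def by auto
  moreover from this have "sgr_generated S a \<subseteq> H"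
    using H(2) by (intro sgr_generated_subset) (auto simp: subsemigroup_def)
  ultimately show False using a(2) unfolding subsemigroup_def by blast
qed

lemma sigma_s_monogenic:
  assumes "monogenic S"
  shows "sigma_s S = \<infinity>"
proof -
  have "\<nexists>F. finite F \<and> (\<forall>H\<in>F. subsemigroup H S \<and> H \<noteq> carrier S) \<and> \<Union>F = carrier S"
    using monogenic_not_covered[OF assms] unfolding proper_subsemigroup_def by blast
  then show ?thesis unfolding sigma_s_def by simp
qed

lemma not_monogenic_proper_subsemigroup:
  assumes "is_semigroup S" "\<not> monogenic S" "x \<in> carrier S"
  obtains H where "proper_subsemigroup H S" "x \<in> H"
  using assms subsemigroup_sgr_generated[OF assms(1,3)]
  unfolding monogenic_def proper_subsemigroup_def by blast

lemma sigma_s_eq_2I: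
  assumes "proper_subsemigroup H1 S" "proper_subsemigroup H2 S" "H1 \<union> H2 = carrier S"
  shows "sigma_s S = 2"
proof -
  let ?cover = "\<lambda>n. \<exists>F. finite F \<and> card F = n \<and>
                 (\<forall>H\<in>F. subsemigroup H S \<and> H \<noteq> carrier S) \<and> \<Union>F = carrier S"
  have "H1 \<noteq> H2" "carrier S \<noteq> {}"
    using assms unfolding proper_subsemigroup_def subsemigroup_def by auto
  then have cover2: "?cover 2"
    using assms unfolding proper_subsemigroup_def by (intro exI[of _ "{H1, H2}"]) auto
  have "2 \<le> n" if "?cover n" for n
  proof (rule ccontr)
    assume "\<not> 2 \<le> n"
    then consider "n = 0" | "n = 1" by linarith
    then show False
      using that \<open>carrier S \<noteq> {}\<close> by cases (auto simp: card_1_singleton_iff)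
  qed
  then have "(LEAST n. ?cover n) = 2" using cover2 by (intro Least_equality)
  then show ?thesis
    using cover2 unfolding sigma_s_def by (auto simp: numeral_eq_enat)
qed

lemma (in group) finite_closed_subgroup:
  assumes "finite H" "H \<subseteq> carrier G" "H \<noteq> {}" and closed: "\<forall>x\<in>H. \<forall>y\<in>H. x \<otimes> y \<in> H"
  shows "subgroup H G"
proof (rule subgroupI[OF assms(2,3)])
  fix a assume a: "a \<in> H"
  then have aG: "a \<in> carrier G" using assms(2) by blast
  have "inj_on ((\<otimes>) a) H"
    using inj_on_subset[OF inj_on_cmult[OF aG] assms(2)] by simp
  then have translate: "(\<otimes>) a ` H = H"
    using endo_inj_surj[OF assms(1)] closed a by blast
  then obtain y where "y \<in> H" "a = a \<otimes> y" using a by (metis imageE)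
  then have "\<one> \<in> H" using aG assms(2) by auto
  then obtain z where z: "z \<in> H" "\<one> = a \<otimes> z" using translate by (metis imageE)
  then have "inv a = z" using aG assms(2) by (metis inv_comm inv_equality subsetD)
  then show "inv a \<in> H" using z by simp
qed (use closed in blast)

lemma (in group) subsemigroup_iff_subgroup:
  assumes "finite (carrier G)"
  shows "subsemigroup H G \<longleftrightarrow> subgroup H G"
proof
  assume "subsemigroup H G"
  then show "subgroup H G"
    using assms finite_subset[of H "carrier G"]
    by (intro finite_closed_subgroup) (auto simp: subsemigroup_def)
next
  assume "subgroup H G"
  then show "subsemigroup H G"
    by (auto simp: subsemigroup_def subgroup_def)
qed

lemma sigma_s_group:
  assumes "group (S\<lparr>one := e\<rparr>)" "finite (carrier S)"
  shows "sigma_s S = sigma_g (S\<lparr>one := e\<rparr>)"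
proof -
  have "subsemigroup H S \<longleftrightarrow> subgroup H (S\<lparr>one := e\<rparr>)" for H
    using group.subsemigroup_iff_subgroup[OF assms(1)] assms(2)
    by (simp add: subsemigroup_def)
  then show ?thesis unfolding sigma_s_def sigma_g_def by simp
qed

lemma is_group_sgrI:
  assumes "is_semigroup S"
    and left: "\<forall>a\<in>carrier S. (\<lambda>s. a \<otimes>\<^bsub>S\<^esub> s) ` carrier S = carrier S"
    and right: "\<forall>a\<in>carrier S. (\<lambda>s. s \<otimes>\<^bsub>S\<^esub> a) ` carrier S = carrier S"
  shows "is_group_sgr S"
proof -
  note closed = is_semigroupD(2)[OF assms(1)] and assoc = is_semigroupD(3)[OF assms(1)]
  obtain a where a: "a \<in> carrier S"
    using is_semigroupD(1)[OF assms(1)] by blast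
  then obtain e where e: "e \<in> carrier S" "e \<otimes>\<^bsub>S\<^esub> a = a"
    using right by (metis (no_types, lifting) imageE)
  have e_left_one: "e \<otimes>\<^bsub>S\<^esub> b = b" if "b \<in> carrier S" for b
  proof -
    obtain t where "t \<in> carrier S" "b = a \<otimes>\<^bsub>S\<^esub> t"
      using left a \<open>b \<in> carrier S\<close> by (metis (no_types, lifting) imageE)
    then show ?thesis using assoc[OF e(1) a] e by simp
  qed
  have "group (S\<lparr>one := e\<rparr>)"
  proof (rule groupI)
    fix x assume "x \<in> carrier (S\<lparr>one := e\<rparr>)"
    then show "\<exists>y\<in>carrier (S\<lparr>one := e\<rparr>). y \<otimes>\<^bsub>S\<lparr>one := e\<rparr>\<^esub> x = \<one>\<^bsub>S\<lparr>one := e\<rparr>\<^esub>"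
      using right e(1) by (simp, metis (no_types, lifting) imageE)
  qed (use closed assoc e e_left_one in simp_all)
  then show ?thesis unfolding is_group_sgr_def by blast
qed

definition right_ideal :: "'a set \<Rightarrow> ('a, 'b) monoid_scheme \<Rightarrow> bool" where
  "right_ideal I S \<longleftrightarrow> I \<noteq> {} \<and> I \<subseteq> carrier S \<and> (\<forall>x\<in>I. \<forall>s\<in>carrier S. x \<otimes>\<^bsub>S\<^esub> s \<in> I)"

lemma right_ideal_subsemigroup: "right_ideal I S \<Longrightarrow> subsemigroup I S"
  unfolding right_ideal_def subsemigroup_def by blast

lemma right_ideal_Un: "right_ideal I S \<Longrightarrow> right_ideal J S \<Longrightarrow> right_ideal (I \<union> J) S"
  unfolding right_ideal_def by blast

lemma right_ideal_insert:
  assumes "right_ideal I S" "x \<in> carrier S" "(\<lambda>s. x \<otimes>\<^bsub>S\<^esub> s) ` carrier S \<subseteq> I"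
  shows "right_ideal (insert x I) S"
  using assms unfolding right_ideal_def by blast

lemma right_ideal_principal:
  assumes "is_semigroup S" "x \<in> carrier S"
  shows "right_ideal ((\<lambda>s. x \<otimes>\<^bsub>S\<^esub> s) ` carrier S) S"
  using assms unfolding right_ideal_def is_semigroup_def by auto

lemma maximal_proper_right_ideal:
  assumes "finite (carrier S)" "right_ideal I S" "I \<noteq> carrier S"
  obtains M where "right_ideal M S" "M \<noteq> carrier S"
    "\<And>N. right_ideal N S \<Longrightarrow> M \<subset> N \<Longrightarrow> N = carrier S"
proof -
  let ?P = "{N. right_ideal N S \<and> N \<noteq> carrier S}"
  have "finite ?P"
    using assms(1) by (intro finite_subset[of ?P "Pow (carrier S)"]) (auto simp: right_ideal_def)
  then obtain M where "M \<in> ?P" "\<forall>N\<in>?P. M \<subseteq> N \<longrightarrow> M = N"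
    using finite_has_maximal2[of ?P I] assms(2,3) by blast
  then show ?thesis using that by blast
qed

lemma subsemigroup_complement_right_ideal:
  assumes "is_semigroup S" "right_ideal M S" "M \<noteq> carrier S"
    and surj: "\<forall>x\<in>carrier S - M. (\<lambda>s. x \<otimes>\<^bsub>S\<^esub> s) ` carrier S = carrier S"
  shows "subsemigroup (carrier S - M) S"
  unfolding subsemigroup_def
proof (intro conjI ballI)
  fix x y assume x: "x \<in> carrier S - M" and y: "y \<in> carrier S - M"
  have closed: "x \<otimes>\<^bsub>S\<^esub> y \<in> carrier S"
    using is_semigroupD(2)[OF assms(1)] x y by blast
  have "(\<lambda>s. (x \<otimes>\<^bsub>S\<^esub> y) \<otimes>\<^bsub>S\<^esub> s) ` carrier S
      = (\<lambda>s. x \<otimes>\<^bsub>S\<^esub> (y \<otimes>\<^bsub>S\<^esub> s)) ` carrier S"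
    using is_semigroupD(3)[OF assms(1)] x y by (intro image_cong) auto
  also have "\<dots> = (\<lambda>s. x \<otimes>\<^bsub>S\<^esub> s) ` ((\<lambda>s. y \<otimes>\<^bsub>S\<^esub> s) ` carrier S)"
    by (simp add: image_image)
  also have "\<dots> = carrier S"
    using surj x y by (metis (no_types, lifting))
  finally have full: "(\<lambda>s. (x \<otimes>\<^bsub>S\<^esub> y) \<otimes>\<^bsub>S\<^esub> s) ` carrier S = carrier S" .
  have "x \<otimes>\<^bsub>S\<^esub> y \<notin> M"
  proof
    assume "x \<otimes>\<^bsub>S\<^esub> y \<in> M"
    then have "(\<lambda>s. (x \<otimes>\<^bsub>S\<^esub> y) \<otimes>\<^bsub>S\<^esub> s) ` carrier S \<subseteq> M"
      using assms(2) unfolding right_ideal_def by auto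
    then show False
      using full assms(2,3) unfolding right_ideal_def by auto
  qed
  with closed show "x \<otimes>\<^bsub>S\<^esub> y \<in> carrier S - M" by simp
qed (use assms(2,3) in \<open>auto simp: right_ideal_def\<close>)

lemma proper_right_ideal_two_cover:
  assumes sg: "is_semigroup S" and fin: "finite (carrier S)" and "\<not> monogenic S"
    and "right_ideal I S" "I \<noteq> carrier S"
  shows "\<exists>H1 H2. proper_subsemigroup H1 S \<and> proper_subsemigroup H2 S \<and> H1 \<union> H2 = carrier S"
proof -
  obtain M where M: "right_ideal M S" "M \<noteq> carrier S"
    and maximal: "\<And>N. right_ideal N S \<Longrightarrow> M \<subset> N \<Longrightarrow> N = carrier S"
    using maximal_proper_right_ideal[OF fin assms(4,5)] by blast
  have M_proper: "proper_subsemigroup M S"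
    using M right_ideal_subsemigroup unfolding proper_subsemigroup_def by blast
  show ?thesis
  proof (cases "\<exists>N. right_ideal N S \<and> N \<noteq> carrier S \<and> \<not> N \<subseteq> M")
    case True
    then obtain N where N: "right_ideal N S" "N \<noteq> carrier S" "\<not> N \<subseteq> M" by blast
    then have "M \<union> N = carrier S" using maximal right_ideal_Un[OF M(1) N(1)] by blast
    then show ?thesis
      using M_proper N right_ideal_subsemigroup unfolding proper_subsemigroup_def by blast
  next
    case below_M: False
    show ?thesis
    proof (cases "\<exists>x\<in>carrier S - M. (\<lambda>s. x \<otimes>\<^bsub>S\<^esub> s) ` carrier S \<noteq> carrier S")
      case True
      then obtain x where x: "x \<in> carrier S" "x \<notin> M"
        and "(\<lambda>s. x \<otimes>\<^bsub>S\<^esub> s) ` carrier S \<noteq> carrier S" by blast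
      then have "(\<lambda>s. x \<otimes>\<^bsub>S\<^esub> s) ` carrier S \<subseteq> M"
        using below_M right_ideal_principal[OF sg x(1)] by blast
      then have "insert x M = carrier S"
        using maximal right_ideal_insert[OF M(1) x(1)] x(2) by blast
      moreover obtain H where H: "proper_subsemigroup H S" "x \<in> H"
        using not_monogenic_proper_subsemigroup[OF sg assms(3) x(1)] .
      moreover have "H \<subseteq> carrier S"
        using H(1) unfolding proper_subsemigroup_def subsemigroup_def by blast
      ultimately have "M \<union> H = carrier S" by auto
      then show ?thesis using M_proper H(1) by blast
    next
      case False
      then have "proper_subsemigroup (carrier S - M) S"
        using subsemigroup_complement_right_ideal[OF sg M] M(1)
        unfolding proper_subsemigroup_def right_ideal_def by auto
      moreover have "M \<union> (carrier S - M) = carrier S"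
        using M(1) unfolding right_ideal_def by blast
      ultimately show ?thesis using M_proper by blast
    qed
  qed
qed

definition opposite_sgr :: "('a, 'b) monoid_scheme \<Rightarrow> ('a, 'b) monoid_scheme" where
  "opposite_sgr S = S\<lparr>mult := \<lambda>x y. y \<otimes>\<^bsub>S\<^esub> x\<rparr>"

lemma carrier_opposite_sgr [simp]: "carrier (opposite_sgr S) = carrier S"
  and mult_opposite_sgr [simp]: "x \<otimes>\<^bsub>opposite_sgr S\<^esub> y = y \<otimes>\<^bsub>S\<^esub> x"
  by (simp_all add: opposite_sgr_def)

lemma is_semigroup_opposite_sgr: "is_semigroup S \<Longrightarrow> is_semigroup (opposite_sgr S)"
  unfolding is_semigroup_def by simp

lemma proper_subsemigroup_opposite_sgr_iff [simp]:
  "proper_subsemigroup H (opposite_sgr S) \<longleftrightarrow> proper_subsemigroup H S"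
  unfolding proper_subsemigroup_def subsemigroup_def by auto

lemma monogenic_opposite_sgr_iff [simp]: "monogenic (opposite_sgr S) \<longleftrightarrow> monogenic S"
proof -
  have "sgr_generated (opposite_sgr S) a = sgr_generated S a" for a
    unfolding sgr_generated_def by (rule arg_cong[where f = Inter]) auto
  then show ?thesis unfolding monogenic_def by simp
qed

lemma proper_one_sided_ideal_if_not_group:
  assumes "is_semigroup S" "\<not> is_group_sgr S"
  shows "\<exists>S'\<in>{S, opposite_sgr S}. \<exists>I. right_ideal I S' \<and> I \<noteq> carrier S"
proof (rule ccontr)
  assume "\<not> ?thesis"
  then have "\<forall>a\<in>carrier S. (\<lambda>s. a \<otimes>\<^bsub>S\<^esub> s) ` carrier S = carrier S"
    and "\<forall>a\<in>carrier S. (\<lambda>s. s \<otimes>\<^bsub>S\<^esub> a) ` carrier S = carrier S"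
    using right_ideal_principal[OF assms(1)]
      right_ideal_principal[OF is_semigroup_opposite_sgr[OF assms(1)]] by auto
  then show False using is_group_sgrI assms by blast
qed

lemma sigma_s_not_monogenic_not_group:
  assumes "is_semigroup S" "finite (carrier S)" "\<not> monogenic S" "\<not> is_group_sgr S"
  shows "sigma_s S = 2"
proof -
  obtain S' I where S': "S' \<in> {S, opposite_sgr S}" "right_ideal I S'" "I \<noteq> carrier S"
    using proper_one_sided_ideal_if_not_group[OF assms(1,4)] by blast
  have "\<exists>H1 H2. proper_subsemigroup H1 S' \<and> proper_subsemigroup H2 S' \<and> H1 \<union> H2 = carrier S'"
    using S' assms is_semigroup_opposite_sgr by (intro proper_right_ideal_two_cover) auto
  then obtain H1 H2 where "proper_subsemigroup H1 S" "proper_subsemigroup H2 S"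
    "H1 \<union> H2 = carrier S"
    using S'(1) by auto
  then show ?thesis by (rule sigma_s_eq_2I)
qed

theorem mainTheorem1:
  fixes S :: "('a, 'b) monoid_scheme"
  assumes "is_semigroup S" and "finite (carrier S)"
  shows "(monogenic S \<longrightarrow> sigma_s S = \<infinity>)
       \<and> (\<forall>e. group (S\<lparr>one := e\<rparr>) \<longrightarrow> sigma_s S = sigma_g (S\<lparr>one := e\<rparr>))
       \<and> (\<not> monogenic S \<and> \<not> is_group_sgr S \<longrightarrow> sigma_s S = 2)"
proof (intro conjI impI allI)
  show "sigma_s S = \<infinity>" if "monogenic S"
    using that by (rule sigma_s_monogenic)
  show "sigma_s S = sigma_g (S\<lparr>one := e\<rparr>)" if "group (S\<lparr>one := e\<rparr>)" for e
    using that assms(2) by (rule sigma_s_group)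
  show "sigma_s S = 2" if "\<not> monogenic S \<and> \<not> is_group_sgr S"
    using assms that by (intro sigma_s_not_monogenic_not_group) auto
qed

end
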